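(* Let $M_t$ be the spherical mean curvature flow of isoparametric hypersurfaces in $S^{n+1}$ with $g$ distinct principal curvatures, with $M_0$ not minimal, and let $A(t),H(t)$ be its shape operator and scalar mean curvature. (1) If $g=1$, then $\|A(t)\|^2/H^2(t)\equiv 1/n$. (2) If $g\ge 2$, there exist $t_1>0$ and positive constants $c_1,c_2$ such that $$c_2e^{-2gnt}\le\frac{\|A(t)\|^2}{H^2(t)}\le c_1e^{-2gnt}\quad\text{for all } t<-t_1.$$
   Context: Let $M^n$ be a compact isoparametric hypersurface in the unit sphere $S^{n+1}\subset\mathbb{R}^{n+2}$ (constant principal curvatures) with $g$ distinct principal curvatures; then $g\in\{1,2,3,4,6\}$. Fix $x_0\in M$ and identify the 2-dimensional normal space $\nu_{x_0}M$ of $M$ in $\mathbb{R}^{n+2}$ with $\mathbb{C}$ so that the two focal submanifolds $M_+$, $M_-$ ($\dim M_+\le\dim M_-$) meet the normal circle at $1$ and $e^{i\pi/g}$ (the intersection points closest to $x_0$). The Weyl chamber is $C=\{re^{i\theta}:r>0,\ 0<\theta<\pi/g\}$. For $k=1,\dots,g$ let $\theta_k=k\pi/g-\pi/2$, $\alpha_k=e^{i\theta_k}$, and $m_k=m_1$ for $k$ odd, $m_k=m_2$ for $k$ even, where $(m_1,m_2)$, $m_1\le m_2$, is the multiplicity data of the principal curvatures; $m_1=m_2$ if $g$ is odd, and $(m_1+m_2)g=2n$. For $x\in C$, $M_x=\{p+\tilde\xi(p):p\in M\}$ where $\tilde\xi$ is the parallel normal field on $M$ with $\tilde\xi(x_0)=x-x_0$;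 it is an $n$-dimensional isoparametric submanifold of $\mathbb{R}^{n+2}$ lying in $S^{n+1}(|x|)$, with normal space $\nu_{x_0}M$ at $x$, and $T_xM_x=\oplus_kE_k$, $\dim E_k=m_k$, with Euclidean shape operator $A_\xi|_{E_k}=\langle\xi,-\alpha_k/\langle x,\alpha_k\rangle\rangle\mathrm{Id}$ ($\langle\cdot,\cdot\rangle$ the real inner product on $\mathbb{C}=\mathbb{R}^2$). $H^E(x),A^E(x)$ denote mean curvature vector and shape operator of $M_x$ at $x$ in $\mathbb{R}^{n+2}$; $H^S(x),A^S(x)$ those of $M_x$ as a hypersurface of $S^{n+1}(|x|)$; $\|A\|^2$ is the sum of squared Hilbert–Schmidt norms over an orthonormal normal basis. Set $\delta=(m_2-m_1)/(m_2+m_1)$ if $g\ge2$ and $\delta=0$ if $g=1$, and let $\theta_{\min}\in(0,\pi/g)$ be defined by $\cos g\theta_{\min}=-\delta$. The spherical MCF of $M_{y(0)}$ is the family $M_t=M_{y(t)}$ with $y(t)\in C$ unit and $y'(t)=H^S(y(t))$; it exists for all $t\le 0$; $A(t)=A^S(y(t))$ and $H^2(t)=\|H^S(y(t))\|^2$. *)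

theory Defs
  imports "HOL-Analysis.Analysis"
begin

text \<open>Model of the normal plane \<open>\<nu>_{x_0}M\<close> as the complex plane (with the real inner
  product on \<open>\<complex> = \<real>^2\<close>).\<close>

definition weyl_chamber :: "nat \<Rightarrow> complex set" where
  "weyl_chamber g = {of_real r * cis \<theta> | r \<theta>. r > 0 \<and> 0 < \<theta> \<and> \<theta> < pi / real g}"

definition iso_theta :: "nat \<Rightarrow> nat \<Rightarrow> real" where
  "iso_theta g k = real k * pi / real g - pi / 2"

definition iso_alpha :: "nat \<Rightarrow> nat \<Rightarrow> complex" where
  "iso_alpha g k = cis (iso_theta g k)"

definition iso_mult :: "nat \<Rightarrow> nat \<Rightarrow> nat \<Rightarrow> nat" where
  "iso_mult m1 m2 k = (if odd k then m1 else m2)"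

text \<open>unit normal of \<open>M_x\<close> in the sphere \<open>S^{n+1}(|x|)\<close> at \<open>x\<close>: the unit vector of the
  normal plane orthogonal to \<open>x\<close>\<close>
definition sph_normal :: "complex \<Rightarrow> complex" where
  "sph_normal x = \<i> * x / of_real (cmod x)"

text \<open>Euclidean shape operator: \<open>A_\<xi>|E_k = \<langle>\<xi>, -\<alpha>_k/\<langle>x,\<alpha>_k\<rangle>\<rangle> Id\<close>\<close>
definition shape_eig :: "nat \<Rightarrow> nat \<Rightarrow> complex \<Rightarrow> complex \<Rightarrow> real" where
  "shape_eig g k x \<xi> = \<xi> \<bullet> (- iso_alpha g k / of_real (x \<bullet> iso_alpha g k))"

definition sph_princ :: "nat \<Rightarrow> nat \<Rightarrow> complex \<Rightarrow> real" where
  "sph_princ g k x = shape_eig g k x (sph_normal x)"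

definition sph_normA2 :: "nat \<Rightarrow> nat \<Rightarrow> nat \<Rightarrow> complex \<Rightarrow> real" where
  "sph_normA2 g m1 m2 x = (\<Sum>k=1..g. real (iso_mult m1 m2 k) * (sph_princ g k x)^2)"

definition sph_H :: "nat \<Rightarrow> nat \<Rightarrow> nat \<Rightarrow> complex \<Rightarrow> real" where
  "sph_H g m1 m2 x = (\<Sum>k=1..g. real (iso_mult m1 m2 k) * sph_princ g k x)"

definition sph_Hvec :: "nat \<Rightarrow> nat \<Rightarrow> nat \<Rightarrow> complex \<Rightarrow> complex" where
  "sph_Hvec g m1 m2 x = of_real (sph_H g m1 m2 x) * sph_normal x"

definition iso_data :: "nat \<Rightarrow> nat \<Rightarrow> nat \<Rightarrow> nat \<Rightarrow> bool" where
  "iso_data g m1 m2 n \<longleftrightarrow> g \<in> {1,2,3,4,6} \<and> 1 \<le> m1 \<and> m1 \<le> m2 \<and>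
      (odd g \<longrightarrow> m1 = m2) \<and> (m1 + m2) * g = 2 * n"

text \<open>spherical MCF \<open>M_t = M_{y(t)}\<close>, \<open>t \<le> 0\<close>\<close>
definition sph_MCF :: "nat \<Rightarrow> nat \<Rightarrow> nat \<Rightarrow> (real \<Rightarrow> complex) \<Rightarrow> bool" where
  "sph_MCF g m1 m2 y \<longleftrightarrow> (\<forall>t\<le>0. y t \<in> weyl_chamber g \<and> cmod (y t) = 1 \<and>
      (y has_vector_derivative sph_Hvec g m1 m2 (y t)) (at t within {..0}))"

end

theory Submission
  imports Defs
begin

text \<open>Write the unit point of the flow as \<open>cis \<theta>\<close> with \<open>0 < \<theta> < \<pi>/g\<close>. The principal
  curvatures are \<open>- cot (\<theta> - k\<pi>/g)\<close>, and the classical identity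
  \<open>\<Sum>\<^sub>k cot (\<theta> - k\<pi>/g) = g cot (g\<theta>)\<close>, applied separately to odd and even \<open>k\<close>, gives
  \<open>H sin (g\<theta>) = - W\<close> with \<open>W = n cos (g\<theta>) + g (m\<^sub>2 - m\<^sub>1) / 2\<close>. Along the flow \<open>W' = g n W\<close>,
  so \<open>W = W\<^sub>0 exp (g n t)\<close> and the ratio equals \<open>\<parallel>A\<parallel>\<^sup>2 sin\<^sup>2 (g\<theta>) / W\<^sub>0\<^sup>2 \<cdot> exp (-2 g n t)\<close>.
  The factor \<open>\<parallel>A\<parallel>\<^sup>2 sin\<^sup>2 (g\<theta>)\<close> is at most \<open>g\<^sup>3 m\<^sub>2\<close> because \<open>\<bar>sin (g u)\<bar> \<le> g \<bar>sin u\<bar>\<close>.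
  It stays away from \<open>0\<close> as \<open>t \<rightarrow> -\<infinity>\<close>: \<open>W \<rightarrow> 0\<close> forces \<open>cos (g\<theta>) \<rightarrow> -\<delta>\<close> with \<open>\<bar>\<delta>\<bar> < 1\<close>,
  and \<open>\<parallel>A\<parallel>\<^sup>2 \<ge> 1\<close> when \<open>g \<ge> 2\<close>. For \<open>g = 1\<close> the hypersurface is umbilic.\<close>

section \<open>Cotangent sums\<close>

lemma abs_sin_mult_le: "\<bar>sin (real n * x)\<bar> \<le> real n * \<bar>sin x\<bar>"
proof (induction n)
  case 0
  show ?case by simp
next
  case (Suc n)
  have "sin (real (Suc n) * x) = sin (real n * x) * cos x + cos (real n * x) * sin x"
    by (simp add: distrib_right sin_add)
  then have "\<bar>sin (real (Suc n) * x)\<bar> \<le> \<bar>sin (real n * x)\<bar> * \<bar>cos x\<bar> + \<bar>cos (real n * x)\<bar> * \<bar>sin x\<bar>"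
    by (metis abs_mult abs_triangle_ineq)
  also have "\<dots> \<le> \<bar>sin (real n * x)\<bar> + \<bar>sin x\<bar>"
    by (intro add_mono mult_right_le_one_le mult_left_le_one_le) auto
  also have "\<dots> \<le> real (Suc n) * \<bar>sin x\<bar>" using Suc by (simp add: algebra_simps)
  finally show ?case .
qed

text \<open>No hypothesis on \<open>sin x\<close> is needed: \<open>cot x = 0\<close> when \<open>sin x = 0\<close>.\<close>

lemma cot_sq_mult_sin_mult_sq_le: "(cot x)\<^sup>2 * (sin (real n * x))\<^sup>2 \<le> (real n)\<^sup>2"
proof (cases "sin x = 0")
  case True
  then show ?thesis by (simp add: cot_def)
next
  case False
  have "(sin (real n * x))\<^sup>2 \<le> (real n)\<^sup>2 * (sin x)\<^sup>2"
    using abs_sin_mult_le[of n x] by (metis abs_ge_zero power2_abs power_mono power_mult_distrib)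
  then have "(cot x)\<^sup>2 * (sin (real n * x))\<^sup>2 \<le> (cot x)\<^sup>2 * ((real n)\<^sup>2 * (sin x)\<^sup>2)"
    by (intro mult_left_mono) auto
  also have "\<dots> = (real n)\<^sup>2 * (cos x)\<^sup>2"
    using False by (simp add: cot_def power_divide field_simps)
  also have "\<dots> \<le> (real n)\<^sup>2"
    by (intro mult_left_le) (auto simp: abs_square_le_1)
  finally show ?thesis .
qed

lemma sin_shift_multiple_pi:
  assumes "g > 0"
  shows "sin (real g * (x - real k * pi / real g)) = (-1) ^ k * sin (real g * x)"
proof -
  have "real g * (x - real k * pi / real g) = real g * x - real k * pi"
    using assms by (simp add: field_simps)
  then show ?thesis by (simp add: sin_diff)
qed

text \<open>The identity holds for every \<open>g \<ge> 1\<close>; only the values \<open>g \<in> {1,2,3,4,6}\<close> are needed,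
  and they follow from \<open>g = 1, 3\<close> by doubling.\<close>

definition cot_sum_identity :: "nat \<Rightarrow> bool" where
  "cot_sum_identity g \<longleftrightarrow> (\<forall>\<theta>. sin (real g * \<theta>) \<noteq> 0 \<longrightarrow>
     (\<Sum>k=1..g. cot (\<theta> - real k * pi / real g)) = real g * cot (real g * \<theta>))"

lemma cot_sum_identity_1: "cot_sum_identity 1"
  by (simp add: cot_sum_identity_def cot_def sin_diff cos_diff)

lemma cot_sum_identity_3: "cot_sum_identity 3"
  unfolding cot_sum_identity_def
proof (intro allI impI)
  fix \<theta> :: real
  assume "sin (real 3 * \<theta>) \<noteq> 0"
  define c s r where "c = cos \<theta>" and "s = sin \<theta>" and "r = sqrt 3"
  have cs: "c\<^sup>2 + s\<^sup>2 = 1" and r: "r\<^sup>2 = 3" by (simp_all add: c_def s_def r_def)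
  have "sin (real 3 * \<theta>) = sin (2 * \<theta>) * c + cos (2 * \<theta>) * s"
    using sin_add[of "2 * \<theta>" \<theta>] by (simp add: c_def s_def algebra_simps)
  also have "\<dots> = 2 * s * c * c + (c\<^sup>2 - s\<^sup>2) * s"
    by (simp add: sin_double cos_double c_def s_def)
  also have "\<dots> = - s * (s - c * r) * (s + c * r)"
    using cs r by algebra
  finally have sin3: "sin (real 3 * \<theta>) = - s * (s - c * r) * (s + c * r)" .
  have cos3: "cos (real 3 * \<theta>) = 4 * c ^ 3 - 3 * c"
    using cos_treble_cos[of \<theta>] by (simp add: c_def)
  have cos120: "cos (2 * pi / 3) = - 1 / 2" and sin120: "sin (2 * pi / 3) = r / 2"
    using cos_double[of "pi / 3"] sin_double[of "pi / 3"]
    by (simp_all add: cos_60 sin_60 r_def power_divide)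
  have angles: "real 1 * pi / real 3 = pi / 3" "real 2 * pi / real 3 = 2 * pi / 3" "real 3 * pi / real 3 = pi"
    by simp_all
  have vals: "sin (\<theta> - real 1 * pi / real 3) = (s - c * r) / 2"
       "cos (\<theta> - real 1 * pi / real 3) = (c + s * r) / 2"
       "sin (\<theta> - real 2 * pi / real 3) = - (s + c * r) / 2"
       "cos (\<theta> - real 2 * pi / real 3) = (s * r - c) / 2"
       "sin (\<theta> - real 3 * pi / real 3) = - s"
       "cos (\<theta> - real 3 * pi / real 3) = - c"
    unfolding angles sin_diff cos_diff cos_60 sin_60 cos120 sin120 sin_pi cos_pi
    by (simp_all add: c_def s_def r_def field_simps)
  have nz: "s \<noteq> 0" "s - c * r \<noteq> 0" "s + c * r \<noteq> 0"
    using \<open>sin (real 3 * \<theta>) \<noteq> 0\<close> unfolding sin3 by auto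
  define p1 p2 p3 where "p1 = (c + s * r) / (s - c * r)" and "p2 = (c - s * r) / (s + c * r)"
    and "p3 = c / s"
  have "p1 * (s - c * r) = c + s * r" "p2 * (s + c * r) = c - s * r" "p3 * s = c"
    using nz by (simp_all add: p1_def p2_def p3_def)
  then have "(p1 + p2 + p3) * (- s * (s - c * r) * (s + c * r)) = 3 * (4 * c ^ 3 - 3 * c)"
    using cs r by algebra
  then have sum: "p1 + p2 + p3 = 3 * (4 * c ^ 3 - 3 * c) / (- s * (s - c * r) * (s + c * r))"
    by (rule eq_divide_imp[rotated]) (use nz in simp)
  have "cot (\<theta> - real 1 * pi / real 3) = p1" "cot (\<theta> - real 2 * pi / real 3) = p2"
    "cot (\<theta> - real 3 * pi / real 3) = p3"
    unfolding cot_def vals using nz by (simp_all add: p1_def p2_def p3_def field_simps)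
  moreover have "(\<Sum>k=1..3. cot (\<theta> - real k * pi / real 3)) = cot (\<theta> - real 1 * pi / real 3)
      + cot (\<theta> - real 2 * pi / real 3) + cot (\<theta> - real 3 * pi / real 3)"
    by (simp add: numeral_3_eq_3)
  moreover have "real 3 * cot (real 3 * \<theta>) = 3 * (4 * c ^ 3 - 3 * c) / (- s * (s - c * r) * (s + c * r))"
    unfolding cot_def sin3 cos3 by simp
  ultimately show "(\<Sum>k=1..3. cot (\<theta> - real k * pi / real 3)) = real 3 * cot (real 3 * \<theta>)"
    using sum by simp
qed

lemma sum_atLeastAtMost_double:
  fixes f :: "nat \<Rightarrow> 'a::comm_monoid_add" and h :: nat
  shows "(\<Sum>k=1..2*h. f k) = (\<Sum>j=1..h. f (2*j - 1) + f (2*j))"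
  by (induction h) (simp_all add: add.assoc)

lemma sin_cos_neq_0_of_sin_double:
  fixes x :: real
  assumes "sin (2 * x) \<noteq> 0"
  shows "sin x \<noteq> 0" "cos x \<noteq> 0"
  using assms by (auto simp: sin_double)

lemma cot_minus_tan:
  fixes x :: real
  assumes "sin x \<noteq> 0" "cos x \<noteq> 0"
  shows "cot x - tan x = 2 * cot (2 * x)"
  using assms unfolding cot_def tan_def sin_double cos_double by (simp add: field_simps power2_eq_square)

lemma cot_sum_odd_even:
  assumes "cot_sum_identity h" "h > 0" and nz: "sin (real (2*h) * \<theta>) \<noteq> 0"
  shows "(\<Sum>j=1..h. cot (\<theta> - real (2*j - 1) * pi / real (2*h))) = - real h * tan (real h * \<theta>)"
    and "(\<Sum>j=1..h. cot (\<theta> - real (2*j) * pi / real (2*h))) = real h * cot (real h * \<theta>)"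
proof -
  have "sin (2 * (real h * \<theta>)) \<noteq> 0" using nz by (simp add: mult.assoc)
  note hnz = sin_cos_neq_0_of_sin_double[OF this]
  have odd_arg: "\<theta> - real (2*j - 1) * pi / real (2*h) = (\<theta> + pi / real (2*h)) - real j * pi / real h"
    if "j \<in> {1..h}" for j
    using that assms(2) by (simp add: of_nat_diff field_simps)
  have shift: "real h * (\<theta> + pi / real (2*h)) = real h * \<theta> + pi / 2"
    using assms(2) by (simp add: field_simps)
  have "(\<Sum>j=1..h. cot (\<theta> - real (2*j - 1) * pi / real (2*h)))
      = (\<Sum>j=1..h. cot ((\<theta> + pi / real (2*h)) - real j * pi / real h))"
    by (intro sum.cong refl arg_cong[where f = cot] odd_arg)
  also have "\<dots> = real h * cot (real h * \<theta> + pi / 2)"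
  proof -
    have "sin (real h * (\<theta> + pi / real (2*h))) \<noteq> 0"
      using hnz(2) by (simp only: shift) (simp add: sin_add)
    with assms(1) have "(\<Sum>j=1..h. cot ((\<theta> + pi / real (2*h)) - real j * pi / real h))
        = real h * cot (real h * (\<theta> + pi / real (2*h)))"
      unfolding cot_sum_identity_def by blast
    then show ?thesis unfolding shift .
  qed
  also have "\<dots> = - real h * tan (real h * \<theta>)"
    by (simp add: cot_def tan_def sin_add cos_add)
  finally show "(\<Sum>j=1..h. cot (\<theta> - real (2*j - 1) * pi / real (2*h))) = - real h * tan (real h * \<theta>)" .
  have "real (2*j) * pi / real (2*h) = real j * pi / real h" for j
    by (simp add: field_simps)
  then show "(\<Sum>j=1..h. cot (\<theta> - real (2*j) * pi / real (2*h))) = real h * cot (real h * \<theta>)"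
    using assms(1) hnz(1) unfolding cot_sum_identity_def by simp
qed

lemma cot_sum_identity_double:
  assumes "cot_sum_identity h" "h > 0"
  shows "cot_sum_identity (2*h)"
  unfolding cot_sum_identity_def
proof (intro allI impI)
  fix \<theta> :: real
  assume nz: "sin (real (2*h) * \<theta>) \<noteq> 0"
  then have "sin (2 * (real h * \<theta>)) \<noteq> 0" by (simp add: mult.assoc)
  note hnz = sin_cos_neq_0_of_sin_double[OF this]
  have "(\<Sum>k=1..2*h. cot (\<theta> - real k * pi / real (2*h)))
      = (\<Sum>j=1..h. cot (\<theta> - real (2*j - 1) * pi / real (2*h)))
        + (\<Sum>j=1..h. cot (\<theta> - real (2*j) * pi / real (2*h)))"
    unfolding sum_atLeastAtMost_double sum.distrib ..
  also have "\<dots> = real h * (cot (real h * \<theta>) - tan (real h * \<theta>))"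
    unfolding cot_sum_odd_even[OF assms nz] by (simp add: algebra_simps)
  also have "\<dots> = real (2*h) * cot (real (2*h) * \<theta>)"
    using cot_minus_tan[OF hnz] by (simp add: mult.assoc)
  finally show "(\<Sum>k=1..2*h. cot (\<theta> - real k * pi / real (2*h))) = real (2*h) * cot (real (2*h) * \<theta>)" .
qed

lemma cot_sum_identity_iso:
  assumes "g \<in> {1,2,3,4,6}"
  shows "cot_sum_identity g"
proof -
  have "cot_sum_identity 2" using cot_sum_identity_double[OF cot_sum_identity_1] by simp
  moreover have "cot_sum_identity 4" using cot_sum_identity_double[OF \<open>cot_sum_identity 2\<close>] by simp
  moreover have "cot_sum_identity 6" using cot_sum_identity_double[OF cot_sum_identity_3] by simp
  ultimately show ?thesis using assms cot_sum_identity_1 cot_sum_identity_3 by auto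
qed

section \<open>Curvatures of the parallel hypersurfaces\<close>

lemma sph_princ_cis: "sph_princ g k (cis \<theta>) = - cot (\<theta> - real k * pi / real g)"
proof -
  define a where "a = real k * pi / real g"
  have th: "iso_theta g k = a - pi/2" by (simp add: iso_theta_def a_def)
  have shift: "cos (a - pi/2) = sin a" "sin (a - pi/2) = - cos a" by (simp_all add: cos_diff sin_diff)
  have "sph_princ g k (cis \<theta>)
      = (cos \<theta> * cos a + sin \<theta> * sin a) / (cos \<theta> * sin a - sin \<theta> * cos a)"
    unfolding sph_princ_def shape_eig_def sph_normal_def iso_alpha_def th
    by (simp add: inner_complex_def shift add_divide_distrib diff_divide_distrib algebra_simps)
  also have "\<dots> = - cot (\<theta> - a)"
  proof -
    have "sin (\<theta> - a) = - (cos \<theta> * sin a - sin \<theta> * cos a)" by (simp add: sin_diff)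
    then show ?thesis unfolding cot_def cos_diff by (simp only: divide_minus_right minus_minus)
  qed
  finally show ?thesis by (simp add: a_def)
qed

lemma sph_H_cis:
  "sph_H g m1 m2 (cis \<theta>) = - (\<Sum>k=1..g. real (iso_mult m1 m2 k) * cot (\<theta> - real k * pi / real g))"
  by (simp add: sph_H_def sph_princ_cis sum_negf)

lemma sph_H_cis_mult_sin:
  assumes g: "g \<in> {1,2,3,4,6}" and m: "odd g \<longrightarrow> m1 = m2" and nz: "sin (real g * \<theta>) \<noteq> 0"
  shows "sph_H g m1 m2 (cis \<theta>) * sin (real g * \<theta>)
    = real g / 2 * (real m1 * (1 - cos (real g * \<theta>)) - real m2 * (1 + cos (real g * \<theta>)))"
proof (cases "odd g")
  case True
  then have "sph_H g m1 m2 (cis \<theta>) = - real m1 * (\<Sum>k=1..g. cot (\<theta> - real k * pi / real g))"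
    using m by (simp add: sph_H_cis iso_mult_def sum_distrib_left sum_negf)
  also have "\<dots> = - real m1 * real g * cot (real g * \<theta>)"
    using cot_sum_identity_iso[OF g] nz by (simp add: cot_sum_identity_def)
  finally show ?thesis
    using True m nz by (simp add: cot_def field_simps)
next
  case False
  then obtain h where gh: "g = 2 * h" and h: "h \<in> {1,2,3}" using g by auto
  then have "cot_sum_identity h" "h > 0" using cot_sum_identity_iso by auto
  note sums = cot_sum_odd_even[OF this nz[unfolded gh]]
  define x where "x = real h * \<theta>"
  have "sin (2 * x) \<noteq> 0" using nz by (simp add: gh x_def mult.assoc)
  note xnz = sin_cos_neq_0_of_sin_double[OF this]
  have "sph_H g m1 m2 (cis \<theta>) = - (\<Sum>j=1..h. real m1 * cot (\<theta> - real (2*j - 1) * pi / real (2*h))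
                                  + real m2 * cot (\<theta> - real (2*j) * pi / real (2*h)))"
    unfolding sph_H_cis gh sum_atLeastAtMost_double
    by (intro arg_cong[where f = uminus] sum.cong refl) (auto simp: iso_mult_def)
  also have "\<dots> = real h * (real m1 * tan x - real m2 * cot x)"
    unfolding sum.distrib sum_distrib_left[symmetric] sums x_def by (simp add: algebra_simps)
  finally have "sph_H g m1 m2 (cis \<theta>) * sin (real g * \<theta>)
      = real h * (real m1 * tan x - real m2 * cot x) * (2 * sin x * cos x)"
    by (simp add: gh x_def sin_double mult.assoc)
  also have "\<dots> = real h * (real m1 * (2 * (sin x)\<^sup>2) - real m2 * (2 * (cos x)\<^sup>2))"
    using xnz by (simp add: tan_def cot_def field_simps power2_eq_square)
  also have "\<dots> = real g / 2 * (real m1 * (1 - cos (2 * x)) - real m2 * (1 + cos (2 * x)))"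
    by (simp add: gh cos_double_sin cos_squared_eq)
  also have "\<dots> = real g / 2 * (real m1 * (1 - cos (real g * \<theta>)) - real m2 * (1 + cos (real g * \<theta>)))"
    by (simp add: gh x_def mult.assoc)
  finally show ?thesis .
qed

lemma unit_complex_eq_cis_Arg:
  assumes "cmod z = 1"
  shows "z = cis (Arg z)"
proof -
  have "z \<noteq> 0" using assms by auto
  then show ?thesis using assms by (simp add: cis_Arg sgn_div_norm)
qed

lemma weyl_chamber_unit_cis:
  assumes "z \<in> weyl_chamber g" "cmod z = 1"
  obtains \<theta> where "z = cis \<theta>" "0 < \<theta>" "\<theta> < pi / real g"
proof -
  from assms(1) obtain r \<theta> where z: "z = of_real r * cis \<theta>" "r > 0" "0 < \<theta>" "\<theta> < pi / real g"
    unfolding weyl_chamber_def by blast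
  then have "r = 1" using assms(2) by (simp add: norm_mult)
  with z that show ?thesis by simp
qed

lemma Im_power_pos_weyl_chamber:
  assumes "z \<in> weyl_chamber g" "cmod z = 1"
  shows "0 < Im (z ^ g)"
proof -
  obtain \<theta> where \<theta>: "z = cis \<theta>" "0 < \<theta>" "\<theta> < pi / real g"
    using weyl_chamber_unit_cis[OF assms] .
  then have "g > 0" by (cases g) auto
  then have "real g * \<theta> < pi" using \<theta> by (simp add: field_simps)
  then show ?thesis using \<theta> \<open>g > 0\<close> by (simp add: Complex.DeMoivre sin_gt_zero)
qed

lemma sph_H_mult_Im_power:
  assumes "g \<in> {1,2,3,4,6}" "odd g \<longrightarrow> m1 = m2" "cmod z = 1" "Im (z ^ g) \<noteq> 0"
  shows "sph_H g m1 m2 z * Im (z ^ g)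
    = real g / 2 * (real m1 * (1 - Re (z ^ g)) - real m2 * (1 + Re (z ^ g)))"
proof -
  define \<theta> where "\<theta> = Arg z"
  have z: "z = cis \<theta>" unfolding \<theta>_def by (rule unit_complex_eq_cis_Arg[OF assms(3)])
  have "Re (z ^ g) = cos (real g * \<theta>)" "Im (z ^ g) = sin (real g * \<theta>)"
    by (simp_all add: z Complex.DeMoivre)
  with sph_H_cis_mult_sin[OF assms(1,2), of \<theta>] assms(4) show ?thesis by (simp add: z)
qed

lemma sph_normA2_mult_Im_power_sq_le:
  assumes "m1 \<le> m2" "cmod z = 1"
  shows "sph_normA2 g m1 m2 z * (Im (z ^ g))\<^sup>2 \<le> real g ^ 3 * real m2"
proof -
  define \<theta> where "\<theta> = Arg z"
  have z: "z = cis \<theta>" unfolding \<theta>_def by (rule unit_complex_eq_cis_Arg[OF assms(2)])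
  have "sph_normA2 g m1 m2 z * (Im (z ^ g))\<^sup>2
      = (\<Sum>k=1..g. real (iso_mult m1 m2 k) * ((cot (\<theta> - real k * pi / real g))\<^sup>2 * (sin (real g * \<theta>))\<^sup>2))"
    by (simp add: z sph_normA2_def sph_princ_cis Complex.DeMoivre sum_distrib_right mult.assoc)
  also have "\<dots> \<le> (\<Sum>k=1..g. real m2 * (real g)\<^sup>2)"
  proof (rule sum_mono)
    fix k
    have "(sin (real g * \<theta>))\<^sup>2 = (sin (real g * (\<theta> - real k * pi / real g)))\<^sup>2" if "g > 0"
      using sin_shift_multiple_pi[OF that] by (simp add: power_mult_distrib power_mult[symmetric])
    then have "(cot (\<theta> - real k * pi / real g))\<^sup>2 * (sin (real g * \<theta>))\<^sup>2 \<le> (real g)\<^sup>2"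
      using cot_sq_mult_sin_mult_sq_le[of "\<theta> - real k * pi / real g" g] by (cases "g = 0") auto
    moreover have "real (iso_mult m1 m2 k) \<le> real m2" using assms(1) by (simp add: iso_mult_def)
    ultimately show "real (iso_mult m1 m2 k) * ((cot (\<theta> - real k * pi / real g))\<^sup>2 * (sin (real g * \<theta>))\<^sup>2)
        \<le> real m2 * (real g)\<^sup>2"
      by (intro mult_mono) auto
  qed
  also have "\<dots> = real g ^ 3 * real m2" by (simp add: power2_eq_square power3_eq_cube)
  finally show ?thesis .
qed

lemma one_le_cot_sq:
  fixes x :: real
  assumes "0 < x" "x \<le> pi / 4"
  shows "1 \<le> (cot x)\<^sup>2"
proof -
  have "0 < tan x" using assms by (intro tan_gt_zero) auto
  moreover have "tan x \<le> 1" using tan_mono_le[of x "pi / 4"] assms by (simp add: tan_45)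
  ultimately have "1 \<le> cot x" by (simp add: cot_altdef one_le_inverse)
  then show ?thesis by (simp add: one_le_power)
qed

lemma sph_normA2_ge_1:
  assumes "2 \<le> g" "1 \<le> m1" "1 \<le> m2" "z \<in> weyl_chamber g" "cmod z = 1"
  shows "1 \<le> sph_normA2 g m1 m2 z"
proof -
  obtain \<theta> where z: "z = cis \<theta>" and \<theta>: "0 < \<theta>" "\<theta> < pi / real g"
    using weyl_chamber_unit_cis[OF assms(4,5)] .
  define f where "f k = real (iso_mult m1 m2 k) * (cot (\<theta> - real k * pi / real g))\<^sup>2" for k
  have mult_ge_1: "1 \<le> real (iso_mult m1 m2 k)" for k using assms(2,3) by (simp add: iso_mult_def)
  then have f_ge: "(cot (\<theta> - real k * pi / real g))\<^sup>2 \<le> f k" for k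
    unfolding f_def by (simp add: mult_le_cancel_right1)
  \<comment> \<open>the terms \<open>k = g, 1\<close> involve \<open>cot \<theta>\<close>, \<open>cot (\<pi>/g - \<theta>)\<close>, and \<open>min \<theta> (\<pi>/g - \<theta>) \<le> \<pi>/4\<close>\<close>
  have "pi / real g \<le> pi / 2" using assms(1) by (intro divide_left_mono) auto
  then have "1 \<le> (cot \<theta>)\<^sup>2 \<or> 1 \<le> (cot (pi / real g - \<theta>))\<^sup>2"
    using \<theta> one_le_cot_sq[of \<theta>] one_le_cot_sq[of "pi / real g - \<theta>"] by linarith
  moreover have "(cot (\<theta> - real g * pi / real g))\<^sup>2 = (cot \<theta>)\<^sup>2"
    using assms(1) by (simp add: cot_def sin_diff cos_diff)
  moreover have "(cot (\<theta> - real 1 * pi / real g))\<^sup>2 = (cot (pi / real g - \<theta>))\<^sup>2"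
    by (metis cot_minus minus_diff_eq power2_minus of_nat_1 mult_1)
  ultimately have "1 \<le> f g + f 1"
    using f_ge[of g] f_ge[of 1] zero_le_power2[of "cot \<theta>"] zero_le_power2[of "cot (pi / real g - \<theta>)"]
    by linarith
  also have "f g + f 1 = sum f {1, g}" using assms(1) by simp
  also have "\<dots> \<le> sum f {1..g}"
    using assms(1) by (intro sum_mono2) (auto simp: f_def)
  also have "\<dots> = sph_normA2 g m1 m2 z"
    by (simp add: z f_def sph_normA2_def sph_princ_cis)
  finally show ?thesis .
qed

section \<open>The flow\<close>

lemma exp_solution_of_linear_ode:
  fixes W :: "real \<Rightarrow> real"
  assumes deriv: "\<And>t. t \<le> 0 \<Longrightarrow> (W has_real_derivative c * W t) (at t within {..0})"
    and "t \<le> 0"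
  shows "W t = W 0 * exp (c * t)"
proof -
  have "\<exists>C. \<forall>x\<in>{..0}. exp (- c * x) * W x = C"
  proof (rule has_field_derivative_zero_constant)
    fix x :: real
    assume "x \<in> {..0}"
    with deriv show "((\<lambda>x. exp (- c * x) * W x) has_real_derivative 0) (at x within {..0})"
      by (auto intro!: derivative_eq_intros)
  qed auto
  then obtain C where C: "\<forall>x\<in>{..0}. exp (- c * x) * W x = C" by blast
  then have "exp (- c * t) * W t = exp (- c * 0) * W 0"
    using C[rule_format, of t] C[rule_format, of 0] \<open>t \<le> 0\<close> by simp
  then show ?thesis by (simp add: exp_minus field_simps)
qed

lemma sph_MCF_Re_power_deriv:
  assumes "sph_MCF g m1 m2 y" "t \<le> 0"
  shows "((\<lambda>t. Re (y t ^ g)) has_real_derivative - real g * sph_H g m1 m2 (y t) * Im (y t ^ g))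
           (at t within {..0})"
proof -
  let ?H = "sph_H g m1 m2 (y t)"
  have "cmod (y t) = 1" and "(y has_vector_derivative sph_Hvec g m1 m2 (y t)) (at t within {..0})"
    using assms unfolding sph_MCF_def by auto
  then have "(y has_derivative (\<lambda>h. h *\<^sub>R (of_real ?H * (\<i> * y t)))) (at t within {..0})"
    by (simp add: has_vector_derivative_def sph_Hvec_def sph_normal_def)
  note power_deriv = has_derivative_Re[OF has_derivative_power[OF this, of g]]
  have "of_nat g * (h *\<^sub>R (of_real ?H * (\<i> * y t))) * y t ^ (g - 1)
      = of_real (real g * ?H * h) * \<i> * y t ^ g" for h
    by (cases g) (simp_all add: scaleR_conv_of_real algebra_simps)
  then show ?thesis unfolding has_field_derivative_def
    by (intro has_derivative_eq_rhs[OF power_deriv]) (simp add: fun_eq_iff)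
qed

text \<open>At \<open>z = cis \<theta>\<close> this is \<open>n cos (g\<theta>) + g(m\<^sub>2 - m\<^sub>1)/2 = - H sin (g\<theta>)\<close>.\<close>

definition mcf_W :: "nat \<Rightarrow> nat \<Rightarrow> nat \<Rightarrow> nat \<Rightarrow> complex \<Rightarrow> real" where
  "mcf_W g m1 m2 n z = real n * Re (z ^ g) + real g * (real m2 - real m1) / 2"

lemma iso_data_real_n:
  assumes "iso_data g m1 m2 n"
  shows "real n = real g * (real m1 + real m2) / 2"
proof -
  have "real ((m1 + m2) * g) = real (2 * n)" using assms unfolding iso_data_def by presburger
  then show ?thesis by (simp add: algebra_simps)
qed

lemma sph_H_mult_Im_power_eq_mcf_W:
  assumes "iso_data g m1 m2 n" "z \<in> weyl_chamber g" "cmod z = 1"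
  shows "sph_H g m1 m2 z * Im (z ^ g) = - mcf_W g m1 m2 n z"
  using sph_H_mult_Im_power[of g m1 m2 z] Im_power_pos_weyl_chamber[OF assms(2,3)] assms
  unfolding mcf_W_def iso_data_real_n[OF assms(1)] by (simp add: iso_data_def field_simps)

lemma sph_MCF_mcf_W_exp:
  assumes "iso_data g m1 m2 n" "sph_MCF g m1 m2 y" "t \<le> 0"
  shows "mcf_W g m1 m2 n (y t) = mcf_W g m1 m2 n (y 0) * exp (real g * real n * t)"
proof (rule exp_solution_of_linear_ode[OF _ assms(3)])
  fix s :: real
  assume s: "s \<le> 0"
  have y: "y s \<in> weyl_chamber g" "cmod (y s) = 1" using assms(2) s unfolding sph_MCF_def by auto
  show "((\<lambda>t. mcf_W g m1 m2 n (y t)) has_real_derivative real g * real n * mcf_W g m1 m2 n (y s))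
      (at s within {..0})"
  proof -
    have "((\<lambda>t. mcf_W g m1 m2 n (y t)) has_real_derivative
        real n * (- real g * sph_H g m1 m2 (y s) * Im (y s ^ g)) + 0) (at s within {..0})"
      unfolding mcf_W_def
      by (intro derivative_intros DERIV_cmult sph_MCF_Re_power_deriv[OF assms(2) s])
    moreover have "real n * (- real g * sph_H g m1 m2 (y s) * Im (y s ^ g)) + 0
        = real g * real n * mcf_W g m1 m2 n (y s)"
      using sph_H_mult_Im_power_eq_mcf_W[OF assms(1) y] by (simp add: algebra_simps)
    ultimately show ?thesis by simp
  qed
qed

lemma affine_exp_eventually_abs_le:
  fixes a b c :: real
  assumes "0 < a" "\<bar>b\<bar> < 1"
  shows "\<exists>t1>0. \<forall>t < - t1. \<bar>b + c * exp (a * t)\<bar> \<le> (1 + \<bar>b\<bar>) / 2"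
proof -
  have "filterlim (\<lambda>t. a * t) at_bot at_bot"
    using assms(1) by (intro filterlim_tendsto_pos_mult_at_bot[OF tendsto_const] filterlim_ident)
  then have "((\<lambda>t. b + c * exp (a * t)) \<longlongrightarrow> b + c * 0) at_bot"
    by (intro tendsto_intros filterlim_compose[OF exp_at_bot])
  then have "eventually (\<lambda>t. dist (b + c * exp (a * t)) b < (1 - \<bar>b\<bar>) / 2) at_bot"
    using assms(2) by (intro tendstoD) auto
  then obtain N where N: "\<And>t. t \<le> N \<Longrightarrow> \<bar>c * exp (a * t)\<bar> < (1 - \<bar>b\<bar>) / 2"
    by (auto simp: eventually_at_bot_linorder dist_real_def)
  show ?thesis
  proof (intro exI conjI allI impI)
    show "0 < \<bar>N\<bar> + 1" by simp
    fix t assume "t < - (\<bar>N\<bar> + 1)"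
    then have "\<bar>c * exp (a * t)\<bar> < (1 - \<bar>b\<bar>) / 2" by (intro N) linarith
    have "\<bar>b + c * exp (a * t)\<bar> \<le> \<bar>b\<bar> + \<bar>c * exp (a * t)\<bar>" by (rule abs_triangle_ineq)
    also have "\<dots> \<le> (1 + \<bar>b\<bar>) / 2" using \<open>\<bar>c * exp (a * t)\<bar> < (1 - \<bar>b\<bar>) / 2\<close> by simp
    finally show "\<bar>b + c * exp (a * t)\<bar> \<le> (1 + \<bar>b\<bar>) / 2" .
  qed
qed

lemma sph_MCF_Im_power_sq_eventually_ge:
  assumes "iso_data g m1 m2 n" "sph_MCF g m1 m2 y"
  shows "\<exists>t1>0. \<exists>\<epsilon>>0. \<forall>t < - t1. \<epsilon> \<le> (Im (y t ^ g))\<^sup>2"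
proof -
  define \<delta> where "\<delta> = real g * (real m2 - real m1) / 2 / real n"
  have m: "1 \<le> m1" "m1 \<le> m2" "g > 0" using assms(1) unfolding iso_data_def by auto
  then have n: "real n > 0" unfolding iso_data_real_n[OF assms(1)] by simp
  have "0 \<le> real g * (real m2 - real m1) / 2" using m by simp
  moreover have "real g * (real m2 - real m1) / 2 < real n"
    using m unfolding iso_data_real_n[OF assms(1)] by (simp add: algebra_simps)
  ultimately have "\<bar>\<delta>\<bar> < 1" using n unfolding \<delta>_def by simp
  moreover have "0 < real g * real n" using m n by simp
  ultimately obtain t1 where "t1 > 0" and t1: "\<And>t. t < - t1 \<Longrightarrow>
      \<bar>- \<delta> + mcf_W g m1 m2 n (y 0) / real n * exp (real g * real n * t)\<bar> \<le> (1 + \<bar>\<delta>\<bar>) / 2"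
    using affine_exp_eventually_abs_le[of "real g * real n" "- \<delta>" "mcf_W g m1 m2 n (y 0) / real n"]
    by auto
  define q where "q = (1 + \<bar>\<delta>\<bar>) / 2"
  have q: "0 \<le> q" "q < 1" using \<open>\<bar>\<delta>\<bar> < 1\<close> unfolding q_def by auto
  have bound: "1 - q\<^sup>2 \<le> (Im (y t ^ g))\<^sup>2" if t: "t < - t1" for t
  proof -
    have "t \<le> 0" using t \<open>t1 > 0\<close> by simp
    then have unit: "cmod (y t) = 1" using assms(2) unfolding sph_MCF_def by auto
    have "real n * Re (y t ^ g) + real g * (real m2 - real m1) / 2
        = mcf_W g m1 m2 n (y 0) * exp (real g * real n * t)"
      using sph_MCF_mcf_W_exp[OF assms \<open>t \<le> 0\<close>] unfolding mcf_W_def[of g m1 m2 n "y t"] .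
    then have "Re (y t ^ g)
        = (mcf_W g m1 m2 n (y 0) * exp (real g * real n * t) - real g * (real m2 - real m1) / 2) / real n"
      using n by (simp add: eq_divide_eq algebra_simps)
    then have "\<bar>Re (y t ^ g)\<bar> \<le> q"
      using t1[OF t] unfolding q_def \<delta>_def by (simp add: diff_divide_distrib)
    then have "\<bar>Re (y t ^ g)\<bar>\<^sup>2 \<le> q\<^sup>2" by (rule power_mono) simp
    then have "(Re (y t ^ g))\<^sup>2 \<le> q\<^sup>2" by simp
    moreover have "(Re (y t ^ g))\<^sup>2 + (Im (y t ^ g))\<^sup>2 = 1"
      using unit by (simp add: cmod_power2[symmetric] norm_power)
    ultimately show ?thesis by linarith
  qed
  have "1 - q\<^sup>2 > 0" using q by (simp add: abs_square_less_1)
  with \<open>t1 > 0\<close> bound show ?thesis by (intro exI[where x = t1] exI[where x = "1 - q\<^sup>2"] conjI allI impI) auto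
qed

lemma sph_MCF_mcf_W_0_neq_0:
  assumes "iso_data g m1 m2 n" "sph_MCF g m1 m2 y" "sph_H g m1 m2 (y 0) \<noteq> 0"
  shows "mcf_W g m1 m2 n (y 0) \<noteq> 0"
proof -
  have y: "y 0 \<in> weyl_chamber g" "cmod (y 0) = 1" using assms(2) unfolding sph_MCF_def by auto
  show ?thesis
    using sph_H_mult_Im_power_eq_mcf_W[OF assms(1) y] Im_power_pos_weyl_chamber[OF y] assms(3) by auto
qed

lemma sph_MCF_curvature_ratio:
  assumes "iso_data g m1 m2 n" "sph_MCF g m1 m2 y" "sph_H g m1 m2 (y 0) \<noteq> 0" "t \<le> 0"
  shows "sph_H g m1 m2 (y t) \<noteq> 0"
    and "sph_normA2 g m1 m2 (y t) / (sph_H g m1 m2 (y t))\<^sup>2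
      = sph_normA2 g m1 m2 (y t) * (Im (y t ^ g))\<^sup>2 / (mcf_W g m1 m2 n (y 0))\<^sup>2
        * exp (- 2 * real g * real n * t)"
proof -
  have y: "y s \<in> weyl_chamber g" "cmod (y s) = 1" if "s \<le> 0" for s
    using assms(2) that unfolding sph_MCF_def by auto
  note H_Im = sph_H_mult_Im_power_eq_mcf_W[OF assms(1) y]
  have "mcf_W g m1 m2 n (y 0) \<noteq> 0" by (rule sph_MCF_mcf_W_0_neq_0[OF assms(1-3)])
  moreover have I: "Im (y t ^ g) > 0" by (rule Im_power_pos_weyl_chamber[OF y[OF assms(4)]])
  moreover have H: "sph_H g m1 m2 (y t) * Im (y t ^ g)
      = - mcf_W g m1 m2 n (y 0) * exp (real g * real n * t)"
    using H_Im[of t] assms(4) sph_MCF_mcf_W_exp[OF assms(1,2,4)] by simp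
  ultimately show "sph_H g m1 m2 (y t) \<noteq> 0" by auto
  have "sph_H g m1 m2 (y t) = - mcf_W g m1 m2 n (y 0) * exp (real g * real n * t) / Im (y t ^ g)"
    using H I by (intro eq_divide_imp) auto
  then have H2: "(sph_H g m1 m2 (y t))\<^sup>2
      = (mcf_W g m1 m2 n (y 0))\<^sup>2 * (exp (real g * real n * t))\<^sup>2 / (Im (y t ^ g))\<^sup>2"
    by (simp add: power_divide power_mult_distrib)
  have "exp (- 2 * real g * real n * t) * (exp (real g * real n * t))\<^sup>2 = 1"
    by (simp add: power2_eq_square flip: exp_add)
  then have "exp (- 2 * real g * real n * t) = 1 / (exp (real g * real n * t))\<^sup>2"
    by (simp add: eq_divide_eq)
  then show "sph_normA2 g m1 m2 (y t) / (sph_H g m1 m2 (y t))\<^sup>2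
      = sph_normA2 g m1 m2 (y t) * (Im (y t ^ g))\<^sup>2 / (mcf_W g m1 m2 n (y 0))\<^sup>2
        * exp (- 2 * real g * real n * t)"
    unfolding H2 by simp
qed

lemma sph_normA2_div_sph_H_sq_g1:
  assumes "sph_H 1 m m z \<noteq> 0"
  shows "sph_normA2 1 m m z / (sph_H 1 m m z)\<^sup>2 = 1 / real m"
  using assms by (simp add: sph_normA2_def sph_H_def iso_mult_def power2_eq_square)

lemma sph_MCF_ratio_g1:
  assumes "iso_data 1 m1 m2 n" "sph_MCF 1 m1 m2 y" "sph_H 1 m1 m2 (y 0) \<noteq> 0" "t \<le> 0"
  shows "sph_normA2 1 m1 m2 (y t) / (sph_H 1 m1 m2 (y t))\<^sup>2 = 1 / real n"
proof -
  have "m1 = m2" "real n = real m2" using assms(1) iso_data_real_n[OF assms(1)] by (auto simp: iso_data_def)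
  then show ?thesis
    using sph_MCF_curvature_ratio(1)[OF assms] sph_normA2_div_sph_H_sq_g1 by simp
qed

lemma sph_MCF_ratio_exp_bounds:
  assumes "iso_data g m1 m2 n" "sph_MCF g m1 m2 y" "sph_H g m1 m2 (y 0) \<noteq> 0" "2 \<le> g"
  shows "\<exists>t1>0. \<exists>c1>0. \<exists>c2>0. \<forall>t < - t1.
      c2 * exp (- 2 * real g * real n * t) \<le> sph_normA2 g m1 m2 (y t) / (sph_H g m1 m2 (y t))\<^sup>2
    \<and> sph_normA2 g m1 m2 (y t) / (sph_H g m1 m2 (y t))\<^sup>2 \<le> c1 * exp (- 2 * real g * real n * t)"
proof -
  have m: "1 \<le> m1" "m1 \<le> m2" using assms(1) by (auto simp: iso_data_def)
  obtain t1 \<epsilon> where "t1 > 0" "\<epsilon> > 0" and Im_ge: "\<And>t. t < - t1 \<Longrightarrow> \<epsilon> \<le> (Im (y t ^ g))\<^sup>2"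
    using sph_MCF_Im_power_sq_eventually_ge[OF assms(1,2)] by blast
  define W where "W = (mcf_W g m1 m2 n (y 0))\<^sup>2"
  have "W > 0" using sph_MCF_mcf_W_0_neq_0[OF assms(1-3)] unfolding W_def by simp
  show ?thesis
  proof (intro exI conjI allI impI)
    show "t1 > 0" by fact
    show "real g ^ 3 * real m2 / W > 0" using \<open>W > 0\<close> assms(4) m by simp
    show "\<epsilon> / W > 0" using \<open>\<epsilon> > 0\<close> \<open>W > 0\<close> by simp
  next
    fix t :: real
    assume t: "t < - t1"
    then have "t \<le> 0" using \<open>t1 > 0\<close> by simp
    then have y: "y t \<in> weyl_chamber g" "cmod (y t) = 1" using assms(2) unfolding sph_MCF_def by auto
    have "\<epsilon> \<le> 1 * (Im (y t ^ g))\<^sup>2" using Im_ge[OF t] by simp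
    also have "\<dots> \<le> sph_normA2 g m1 m2 (y t) * (Im (y t ^ g))\<^sup>2"
      using sph_normA2_ge_1[OF assms(4) m(1) _ y] m by (intro mult_right_mono) auto
    finally have "\<epsilon> \<le> sph_normA2 g m1 m2 (y t) * (Im (y t ^ g))\<^sup>2" .
    moreover have "sph_normA2 g m1 m2 (y t) * (Im (y t ^ g))\<^sup>2 \<le> real g ^ 3 * real m2"
      by (rule sph_normA2_mult_Im_power_sq_le[OF m(2) y(2)])
    ultimately show "\<epsilon> / W * exp (- 2 * real g * real n * t)
        \<le> sph_normA2 g m1 m2 (y t) / (sph_H g m1 m2 (y t))\<^sup>2"
      and "sph_normA2 g m1 m2 (y t) / (sph_H g m1 m2 (y t))\<^sup>2
        \<le> real g ^ 3 * real m2 / W * exp (- 2 * real g * real n * t)"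
      unfolding sph_MCF_curvature_ratio(2)[OF assms(1-3) \<open>t \<le> 0\<close>] W_def[symmetric]
      using \<open>W > 0\<close> by (auto intro!: mult_right_mono divide_right_mono)
  qed
qed

theorem corollary4p15:
  fixes g m1 m2 n :: nat and y :: "real \<Rightarrow> complex"
  assumes "iso_data g m1 m2 n"
    and "sph_MCF g m1 m2 y"
    and "sph_H g m1 m2 (y 0) \<noteq> 0"
  shows "(g = 1 \<longrightarrow> (\<forall>t\<le>0. sph_normA2 g m1 m2 (y t) / (sph_H g m1 m2 (y t))^2 = 1 / real n))
       \<and> (g \<ge> 2 \<longrightarrow> (\<exists>t1>0. \<exists>c1>0. \<exists>c2>0. \<forall>t< -t1.
            c2 * exp (- 2 * real g * real n * t) \<le> sph_normA2 g m1 m2 (y t) / (sph_H g m1 m2 (y t))^2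
          \<and> sph_normA2 g m1 m2 (y t) / (sph_H g m1 m2 (y t))^2 \<le> c1 * exp (- 2 * real g * real n * t)))"
  using sph_MCF_ratio_g1[of m1 m2 n y] sph_MCF_ratio_exp_bounds[OF assms] assms by auto

end
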